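(* Let $(A,\mu,\Delta,\alpha,\beta,\psi,\omega)$ be an infinitesimal BiHom-bialgebra, with notation $\mu(a\otimes b)=a\cdot b$ and $\Delta(a)=a_1\otimes a_2$. Define a new multiplication on $A$ by \[ a\ast b=\alpha\beta^{2}\psi(b_{1})\cdot\big[\alpha(a)\cdot\alpha^{2}\omega(b_{2})\big]=\big[\beta^{2}\psi(b_{1})\cdot\alpha(a)\big]\cdot\alpha^{2}\beta\omega(b_{2}),\qquad a,b\in A. \] Then $(A,\ast,\alpha^{2}\beta,\alpha^{2}\beta^{2}\psi\omega)$ is a left BiHom-pre-Lie algebra.
   Context: Work over a field $\Bbbk$. A BiHom-associative algebra is a 4-tuple $(A,\mu,\alpha,\beta)$ with $A$ a linear space, $\mu:A\otimes A\to A$ (written $x\cdot y$) and $\alpha,\beta:A\to A$ linear maps such that $\alpha\beta=\beta\alpha$, $\alpha(x\cdot y)=\alpha(x)\cdot\alpha(y)$, $\beta(x\cdot y)=\beta(x)\cdot\beta(y)$ and $\alpha(x)\cdot(y\cdot z)=(x\cdot y)\cdot\beta(z)$ for all $x,y,z$. A BiHom-coassociative coalgebra is a 4-tuple $(C,\Delta,\psi,\omega)$ with $\Delta:C\to C\otimes C$ and $\psi,\omega:C\to C$ linear, $\psi\omega=\omega\psi$, $(\psi\otimes\psi)\Delta=\Delta\psi$, $(\omega\otimes\omega)\Delta=\Delta\omega$ and $(\Delta\otimes\psi)\Delta=(\omega\otimes\Delta)\Delta$. An infinitesimal BiHom-bialgebra is a 7-tuple $(A,\mu,\Delta,\alpha,\beta,\psi,\omega)$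 such that $(A,\mu,\alpha,\beta)$ is a BiHom-associative algebra, $(A,\Delta,\psi,\omega)$ is a BiHom-coassociative coalgebra, and for all $a,b\in A$: $\Delta(a\cdot b)=\omega(a)\cdot b_1\otimes\beta(b_2)+\alpha(a_1)\otimes a_2\cdot\psi(b)$; $\alpha\psi=\psi\alpha$, $\alpha\omega=\omega\alpha$, $\beta\psi=\psi\beta$, $\beta\omega=\omega\beta$; $(\alpha\otimes\alpha)\Delta=\Delta\alpha$, $(\beta\otimes\beta)\Delta=\Delta\beta$; $\psi(a\cdot b)=\psi(a)\cdot\psi(b)$, $\omega(a\cdot b)=\omega(a)\cdot\omega(b)$. A left BiHom-pre-Lie algebra is a 4-tuple $(A,\mu,\alpha,\beta)$ with $\alpha\beta=\beta\alpha$, $\alpha,\beta$ multiplicative for $\mu$, and $\alpha\beta(x)\cdot(\alpha(y)\cdot z)-(\beta(x)\cdot\alpha(y))\cdot\beta(z)=\alpha\beta(y)\cdot(\alpha(x)\cdot z)-(\beta(y)\cdot\alpha(x))\cdot\beta(z)$ for all $x,y,z$. Algebras and coalgebras are not assumed (co)unital. *)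

theory Defs
  imports Complex_Main
begin

text \<open>Elements of A\<otimes>A are represented by finite lists of pairs (x_i,y_i),
  standing for the sum of x_i\<otimes>y_i; elements of A\<otimes>A\<otimes>A by lists of triples.
  Two such representations denote the same tensor iff they agree under
  every bilinear (resp. trilinear) form into k (true over a field).\<close>

definition lin :: "('k::field \<Rightarrow> 'a::ab_group_add \<Rightarrow> 'a) \<Rightarrow> ('a \<Rightarrow> 'a) \<Rightarrow> bool" where
  "lin scale f \<longleftrightarrow> Vector_Spaces.linear scale scale f"

definition lin_form :: "('k::field \<Rightarrow> 'a::ab_group_add \<Rightarrow> 'a) \<Rightarrow> ('a \<Rightarrow> 'k) \<Rightarrow> bool" where
  "lin_form scale f \<longleftrightarrow> Vector_Spaces.linear scale (*) f"

definition bilin_form :: "('k::field \<Rightarrow> 'a::ab_group_add \<Rightarrow> 'a) \<Rightarrow> ('a \<Rightarrow> 'a \<Rightarrow> 'k) \<Rightarrow> bool" where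
  "bilin_form scale \<phi> \<longleftrightarrow> (\<forall>x. lin_form scale (\<phi> x)) \<and> (\<forall>y. lin_form scale (\<lambda>x. \<phi> x y))"

definition trilin_form :: "('k::field \<Rightarrow> 'a::ab_group_add \<Rightarrow> 'a) \<Rightarrow> ('a \<Rightarrow> 'a \<Rightarrow> 'a \<Rightarrow> 'k) \<Rightarrow> bool" where
  "trilin_form scale \<phi> \<longleftrightarrow> (\<forall>y z. lin_form scale (\<lambda>x. \<phi> x y z)) \<and>
     (\<forall>x z. lin_form scale (\<lambda>y. \<phi> x y z)) \<and> (\<forall>x y. lin_form scale (\<lambda>z. \<phi> x y z))"

definition bilin_map :: "('k::field \<Rightarrow> 'a::ab_group_add \<Rightarrow> 'a) \<Rightarrow> ('a \<Rightarrow> 'a \<Rightarrow> 'a) \<Rightarrow> bool" where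
  "bilin_map scale m \<longleftrightarrow> (\<forall>x. lin scale (m x)) \<and> (\<forall>y. lin scale (\<lambda>x. m x y))"

definition teq2 :: "('k::field \<Rightarrow> 'a::ab_group_add \<Rightarrow> 'a) \<Rightarrow> ('a \<times> 'a) list \<Rightarrow> ('a \<times> 'a) list \<Rightarrow> bool" where
  "teq2 scale s t \<longleftrightarrow> (\<forall>\<phi>. bilin_form scale \<phi> \<longrightarrow>
     (\<Sum>(x,y)\<leftarrow>s. \<phi> x y) = (\<Sum>(x,y)\<leftarrow>t. \<phi> x y))"

definition teq3 :: "('k::field \<Rightarrow> 'a::ab_group_add \<Rightarrow> 'a) \<Rightarrow> ('a \<times> 'a \<times> 'a) list \<Rightarrow> ('a \<times> 'a \<times> 'a) list \<Rightarrow> bool" where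
  "teq3 scale s t \<longleftrightarrow> (\<forall>\<phi>. trilin_form scale \<phi> \<longrightarrow>
     (\<Sum>(x,y,z)\<leftarrow>s. \<phi> x y z) = (\<Sum>(x,y,z)\<leftarrow>t. \<phi> x y z))"

definition lin_comult :: "('k::field \<Rightarrow> 'a::ab_group_add \<Rightarrow> 'a) \<Rightarrow> ('a \<Rightarrow> ('a \<times> 'a) list) \<Rightarrow> bool" where
  "lin_comult scale D \<longleftrightarrow> (\<forall>c x y. teq2 scale (D (scale c x + y))
      (map (\<lambda>(u,v). (scale c u, v)) (D x) @ D y))"

definition tmap2 :: "('a \<Rightarrow> 'a) \<Rightarrow> ('a \<Rightarrow> 'a) \<Rightarrow> ('a \<times> 'a) list \<Rightarrow> ('a \<times> 'a) list" where
  "tmap2 f g s = map (\<lambda>(x,y). (f x, g y)) s"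

definition BiHom_assoc_algebra ::
  "('k::field \<Rightarrow> 'a::ab_group_add \<Rightarrow> 'a) \<Rightarrow> ('a \<Rightarrow> 'a \<Rightarrow> 'a) \<Rightarrow> ('a \<Rightarrow> 'a) \<Rightarrow> ('a \<Rightarrow> 'a) \<Rightarrow> bool" where
  "BiHom_assoc_algebra scale m \<alpha> \<beta> \<longleftrightarrow>
     vector_space scale \<and> bilin_map scale m \<and> lin scale \<alpha> \<and> lin scale \<beta> \<and>
     \<alpha> \<circ> \<beta> = \<beta> \<circ> \<alpha> \<and>
     (\<forall>x y. \<alpha> (m x y) = m (\<alpha> x) (\<alpha> y)) \<and>
     (\<forall>x y. \<beta> (m x y) = m (\<beta> x) (\<beta> y)) \<and>
     (\<forall>x y z. m (\<alpha> x) (m y z) = m (m x y) (\<beta> z))"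

definition BiHom_coassoc_coalgebra ::
  "('k::field \<Rightarrow> 'a::ab_group_add \<Rightarrow> 'a) \<Rightarrow> ('a \<Rightarrow> ('a \<times> 'a) list) \<Rightarrow> ('a \<Rightarrow> 'a) \<Rightarrow> ('a \<Rightarrow> 'a) \<Rightarrow> bool" where
  "BiHom_coassoc_coalgebra scale D \<psi> \<omega> \<longleftrightarrow>
     vector_space scale \<and> lin_comult scale D \<and> lin scale \<psi> \<and> lin scale \<omega> \<and>
     \<psi> \<circ> \<omega> = \<omega> \<circ> \<psi> \<and>
     (\<forall>a. teq2 scale (tmap2 \<psi> \<psi> (D a)) (D (\<psi> a))) \<and>
     (\<forall>a. teq2 scale (tmap2 \<omega> \<omega> (D a)) (D (\<omega> a))) \<and>
     (\<forall>a. teq3 scale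
        (concat (map (\<lambda>(x,y). map (\<lambda>(u,v). (u, v, \<psi> y)) (D x)) (D a)))
        (concat (map (\<lambda>(x,y). map (\<lambda>(u,v). (\<omega> x, u, v)) (D y)) (D a))))"

definition infinitesimal_BiHom_bialgebra ::
  "('k::field \<Rightarrow> 'a::ab_group_add \<Rightarrow> 'a) \<Rightarrow> ('a \<Rightarrow> 'a \<Rightarrow> 'a) \<Rightarrow> ('a \<Rightarrow> ('a \<times> 'a) list) \<Rightarrow>
   ('a \<Rightarrow> 'a) \<Rightarrow> ('a \<Rightarrow> 'a) \<Rightarrow> ('a \<Rightarrow> 'a) \<Rightarrow> ('a \<Rightarrow> 'a) \<Rightarrow> bool" where
  "infinitesimal_BiHom_bialgebra scale m D \<alpha> \<beta> \<psi> \<omega> \<longleftrightarrow>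
     BiHom_assoc_algebra scale m \<alpha> \<beta> \<and>
     BiHom_coassoc_coalgebra scale D \<psi> \<omega> \<and>
     (\<forall>a b. teq2 scale (D (m a b))
        (map (\<lambda>(x,y). (m (\<omega> a) x, \<beta> y)) (D b) @
         map (\<lambda>(x,y). (\<alpha> x, m y (\<psi> b))) (D a))) \<and>
     \<alpha> \<circ> \<psi> = \<psi> \<circ> \<alpha> \<and> \<alpha> \<circ> \<omega> = \<omega> \<circ> \<alpha> \<and>
     \<beta> \<circ> \<psi> = \<psi> \<circ> \<beta> \<and> \<beta> \<circ> \<omega> = \<omega> \<circ> \<beta> \<and>
     (\<forall>a. teq2 scale (tmap2 \<alpha> \<alpha> (D a)) (D (\<alpha> a))) \<and>
     (\<forall>a. teq2 scale (tmap2 \<beta> \<beta> (D a)) (D (\<beta> a))) \<and>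
     (\<forall>x y. \<psi> (m x y) = m (\<psi> x) (\<psi> y)) \<and>
     (\<forall>x y. \<omega> (m x y) = m (\<omega> x) (\<omega> y))"

definition left_BiHom_preLie ::
  "('k::field \<Rightarrow> 'a::ab_group_add \<Rightarrow> 'a) \<Rightarrow> ('a \<Rightarrow> 'a \<Rightarrow> 'a) \<Rightarrow> ('a \<Rightarrow> 'a) \<Rightarrow> ('a \<Rightarrow> 'a) \<Rightarrow> bool" where
  "left_BiHom_preLie scale m \<alpha> \<beta> \<longleftrightarrow>
     vector_space scale \<and> bilin_map scale m \<and> lin scale \<alpha> \<and> lin scale \<beta> \<and>
     \<alpha> \<circ> \<beta> = \<beta> \<circ> \<alpha> \<and>
     (\<forall>x y. \<alpha> (m x y) = m (\<alpha> x) (\<alpha> y)) \<and>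
     (\<forall>x y. \<beta> (m x y) = m (\<beta> x) (\<beta> y)) \<and>
     (\<forall>x y z. m (\<alpha> (\<beta> x)) (m (\<alpha> y) z) - m (m (\<beta> x) (\<alpha> y)) (\<beta> z)
            = m (\<alpha> (\<beta> y)) (m (\<alpha> x) z) - m (m (\<beta> y) (\<alpha> x)) (\<beta> z))"

definition star_prod ::
  "('a::ab_group_add \<Rightarrow> 'a \<Rightarrow> 'a) \<Rightarrow> ('a \<Rightarrow> ('a \<times> 'a) list) \<Rightarrow>
   ('a \<Rightarrow> 'a) \<Rightarrow> ('a \<Rightarrow> 'a) \<Rightarrow> ('a \<Rightarrow> 'a) \<Rightarrow> ('a \<Rightarrow> 'a) \<Rightarrow> 'a \<Rightarrow> 'a \<Rightarrow> 'a" where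
  "star_prod m D \<alpha> \<beta> \<psi> \<omega> a b =
     (\<Sum>(x,y)\<leftarrow>D b. m (\<alpha> (\<beta> (\<beta> (\<psi> x)))) (m (\<alpha> a) (\<alpha> (\<alpha> (\<omega> y)))))"

end

theory Submission
  imports Defs
begin

(* All structure maps commute and are (co)multiplicative, so every composite of them is a monomial
   alpha^i beta^j psi^k omega^l, and all computations can be carried out on such monomials.
   Write s = alpha^2 beta and t = alpha^2 beta^2 psi omega. Expanding st(x) * (s(y) * z) with the
   Leibniz rule for Delta gives three double sums. The one involving Delta(y) is
   (t(x) * s(y)) * t(z), by BiHom-associativity. The other two apply Delta once more to one of the
   two legs of Delta(z); BiHom-coassociativity moves Delta from the second leg to the first, and
   after reassociating, the second-leg sum becomes the first-leg sum with x and y exchanged. Hence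
   the associator of * is symmetric in x and y, which is the left BiHom-pre-Lie identity. *)

definition sum_pairs :: "('a \<Rightarrow> 'a \<Rightarrow> 'b::comm_monoid_add) \<Rightarrow> ('a \<times> 'a) list \<Rightarrow> 'b" where
  "sum_pairs F s = (\<Sum>(x,y)\<leftarrow>s. F x y)"

definition sum_triples :: "('a \<Rightarrow> 'a \<Rightarrow> 'a \<Rightarrow> 'b::comm_monoid_add) \<Rightarrow> ('a \<times> 'a \<times> 'a) list \<Rightarrow> 'b" where
  "sum_triples F s = (\<Sum>(x,y,z)\<leftarrow>s. F x y z)"

lemma sum_pairs_Nil [simp]: "sum_pairs F [] = 0"
  by (simp add: sum_pairs_def)

lemma sum_pairs_Cons [simp]: "sum_pairs F ((x,y) # s) = F x y + sum_pairs F s"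
  by (simp add: sum_pairs_def)

lemma sum_pairs_append [simp]: "sum_pairs F (s @ t) = sum_pairs F s + sum_pairs F t"
  by (simp add: sum_pairs_def)

lemma sum_pairs_map: "sum_pairs F (map (\<lambda>(u,v). (f u, g v)) s) = sum_pairs (\<lambda>u v. F (f u) (g v)) s"
  by (induction s) auto

lemma sum_pairs_add: "sum_pairs (\<lambda>u v. F u v + G u v) s = sum_pairs F s + sum_pairs G s"
  by (induction s) (auto simp: algebra_simps)

lemma additive_sum_pairs:
  assumes "\<And>a b. f (a + b) = f a + f b" and "f 0 = 0"
  shows "f (sum_pairs F s) = sum_pairs (\<lambda>u v. f (F u v)) s"
  by (induction s) (auto simp: assms)

lemma additive_sum_triples:
  assumes "\<And>a b. f (a + b) = f a + f b" and "f 0 = 0"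
  shows "f (sum_triples F s) = sum_triples (\<lambda>u v w. f (F u v w)) s"
  by (induction s) (auto simp: assms sum_triples_def)

lemma sum_triples_concat_right:
  "sum_triples F (concat (map (\<lambda>(x,y). map (\<lambda>(u,v). (u, v, h y)) (D x)) s))
   = sum_pairs (\<lambda>x y. sum_pairs (\<lambda>u v. F u v (h y)) (D x)) s"
proof -
  have "sum_triples F (map (\<lambda>(u,v). (u, v, w)) t) = sum_pairs (\<lambda>u v. F u v w) t" for t w
    by (induction t) (auto simp: sum_triples_def)
  then show ?thesis
    by (induction s) (auto simp: sum_triples_def)
qed

lemma sum_triples_concat_left:
  "sum_triples F (concat (map (\<lambda>(x,y). map (\<lambda>(u,v). (h x, u, v)) (D y)) s))
   = sum_pairs (\<lambda>x y. sum_pairs (\<lambda>u v. F (h x) u v) (D y)) s"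
proof -
  have "sum_triples F (map (\<lambda>(u,v). (w, u, v)) t) = sum_pairs (\<lambda>u v. F w u v) t" for t w
    by (induction t) (auto simp: sum_triples_def)
  then show ?thesis
    by (induction s) (auto simp: sum_triples_def)
qed

definition trilin_map :: "('k::field \<Rightarrow> 'a::ab_group_add \<Rightarrow> 'a) \<Rightarrow> ('a \<Rightarrow> 'a \<Rightarrow> 'a \<Rightarrow> 'a) \<Rightarrow> bool" where
  "trilin_map scale F \<longleftrightarrow> (\<forall>y z. lin scale (\<lambda>x. F x y z)) \<and>
     (\<forall>x z. lin scale (\<lambda>y. F x y z)) \<and> (\<forall>x y. lin scale (\<lambda>z. F x y z))"

lemma lin_iff:
  assumes "vector_space scale"
  shows "lin scale f \<longleftrightarrow>
    (\<forall>x y. f (x + y) = f x + f y) \<and> (\<forall>c x. f (scale c x) = scale c (f x))"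
  using assms by (simp add: lin_def Vector_Spaces.linear_iff)

lemma lin_form_additive:
  assumes "lin_form scale g"
  shows "g (x + y) = g x + g y" and "g 0 = 0"
proof -
  show add: "g (x + y) = g x + g y" for x y
    using assms by (simp add: lin_form_def Vector_Spaces.linear_iff)
  show "g 0 = 0"
    using add[of 0 0] by (metis add_cancel_right_right add_0)
qed

lemma lin_form_comp_lin:
  "lin_form scale g \<Longrightarrow> lin scale f \<Longrightarrow> lin_form scale (\<lambda>x. g (f x))"
  using Vector_Spaces.linear_compose[of scale scale f "(*)" g]
  by (simp add: lin_form_def lin_def comp_def)

lemma field_vector_space: "vector_space ((*) :: 'k::field \<Rightarrow> 'k \<Rightarrow> 'k)"
  by unfold_locales (auto simp: algebra_simps)

lemma lin_forms_separate:
  fixes scale :: "'k::field \<Rightarrow> 'a::ab_group_add \<Rightarrow> 'a"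
  assumes vs: "vector_space scale"
    and eq: "\<And>g. lin_form scale g \<Longrightarrow> g a = g b"
  shows "a = b"
proof (rule ccontr)
  assume "a \<noteq> b"
  interpret vector_space_pair scale "(*) :: 'k \<Rightarrow> 'k \<Rightarrow> 'k"
    using vs field_vector_space by (simp add: vector_space_pair_def)
  have "\<not> vs1.dependent {a - b}"
    using \<open>a \<noteq> b\<close> by simp
  then obtain g where g: "lin_form scale g" and "g (a - b) = 1"
    using linear_independent_extend[of "{a - b}" "\<lambda>_. 1"] by (auto simp: lin_form_def)
  moreover have "g (a - b) = g a - g b"
    using lin_form_additive(1)[OF g, of "a - b" b] by simp
  ultimately show False
    using eq[OF g] by simp
qed

lemma teq2_sum_pairs:
  assumes vs: "vector_space scale" and "teq2 scale s t" and F: "bilin_map scale F"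
  shows "sum_pairs F s = sum_pairs F t"
proof (rule lin_forms_separate[OF vs])
  fix g assume g: "lin_form scale g"
  have "bilin_form scale (\<lambda>u v. g (F u v))"
    using F by (auto simp: bilin_form_def bilin_map_def intro: lin_form_comp_lin[OF g])
  then have "sum_pairs (\<lambda>u v. g (F u v)) s = sum_pairs (\<lambda>u v. g (F u v)) t"
    using assms(2) by (simp add: teq2_def sum_pairs_def)
  then show "g (sum_pairs F s) = g (sum_pairs F t)"
    by (simp add: additive_sum_pairs lin_form_additive[OF g])
qed

lemma teq3_sum_triples:
  assumes vs: "vector_space scale" and "teq3 scale s t" and F: "trilin_map scale F"
  shows "sum_triples F s = sum_triples F t"
proof (rule lin_forms_separate[OF vs])
  fix g assume g: "lin_form scale g"
  have "trilin_form scale (\<lambda>u v w. g (F u v w))"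
    using F by (auto simp: trilin_form_def trilin_map_def intro: lin_form_comp_lin[OF g])
  then have "sum_triples (\<lambda>u v w. g (F u v w)) s = sum_triples (\<lambda>u v w. g (F u v w)) t"
    using assms(2) by (simp add: teq3_def sum_triples_def)
  then show "g (sum_triples F s) = g (sum_triples F t)"
    by (simp add: additive_sum_triples lin_form_additive[OF g])
qed

lemma bilin_map_comp:
  assumes "bilin_map scale F" and "lin scale f" and "lin scale g"
  shows "bilin_map scale (\<lambda>u v. F (f u) (g v))"
proof -
  have "lin scale (F x \<circ> g)" "lin scale ((\<lambda>x. F x y) \<circ> f)" for x y
    using assms unfolding bilin_map_def lin_def by (auto intro: Vector_Spaces.linear_compose)
  then show ?thesis
    by (simp add: bilin_map_def comp_def)
qed

lemma funpow_semiconj: "(\<And>x. f (g x) = h (f x)) \<Longrightarrow> f ((g ^^ n) x) = (h ^^ n) (f x)"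
  by (induction n) auto

lemma funpow_multiplicative:
  "(\<And>x y. f (m x y) = m (f x) (f y)) \<Longrightarrow> (f ^^ n) (m x y) = m ((f ^^ n) x) ((f ^^ n) y)"
  by (induction n) auto

lemma funpow_commute_of_commute:
  assumes "\<And>x. f (g x) = g (f x)"
  shows "(f ^^ i) ((g ^^ j) x) = (g ^^ j) ((f ^^ i) x)"
proof -
  have "(g ^^ j) (f y) = f ((g ^^ j) y)" for y
    using funpow_semiconj[of f g g j y] assms by simp
  then show ?thesis
    using funpow_semiconj[of "g ^^ j" f f i x] by simp
qed

lemma lin_funpow:
  assumes "vector_space scale" and "lin scale f"
  shows "lin scale (f ^^ n)"
proof (induction n)
  case 0
  then show ?case using assms(1) by (simp add: lin_iff)
next
  case (Suc n)
  then show ?case using assms by (simp add: lin_iff)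
qed

locale infinitesimal_BiHom =
  fixes scale :: "'k::field \<Rightarrow> 'a::ab_group_add \<Rightarrow> 'a"
    and m :: "'a \<Rightarrow> 'a \<Rightarrow> 'a" and D :: "'a \<Rightarrow> ('a \<times> 'a) list"
    and \<alpha> \<beta> \<psi> \<omega> :: "'a \<Rightarrow> 'a"
  assumes bialgebra: "infinitesimal_BiHom_bialgebra scale m D \<alpha> \<beta> \<psi> \<omega>"
begin

lemmas bialgebra_axioms =
  bialgebra[unfolded infinitesimal_BiHom_bialgebra_def BiHom_assoc_algebra_def
    BiHom_coassoc_coalgebra_def bilin_map_def]

lemma scale_vector_space: "vector_space scale"
  using bialgebra_axioms by blast

sublocale vs: vector_space scale
  by (rule scale_vector_space)

lemma lin_generators: "lin scale \<alpha>" "lin scale \<beta>" "lin scale \<psi>" "lin scale \<omega>"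
  using bialgebra_axioms by blast+

lemma lin_mult: "lin scale (m c)" "lin scale (\<lambda>x. m x c)"
  using bialgebra_axioms by blast+

lemma generators_commute:
  "\<alpha> (\<beta> x) = \<beta> (\<alpha> x)" "\<alpha> (\<psi> x) = \<psi> (\<alpha> x)" "\<alpha> (\<omega> x) = \<omega> (\<alpha> x)"
  "\<beta> (\<psi> x) = \<psi> (\<beta> x)" "\<beta> (\<omega> x) = \<omega> (\<beta> x)" "\<psi> (\<omega> x) = \<omega> (\<psi> x)"
  using bialgebra_axioms by (metis comp_apply)+

lemma generators_multiplicative:
  "\<alpha> (m x y) = m (\<alpha> x) (\<alpha> y)" "\<beta> (m x y) = m (\<beta> x) (\<beta> y)"
  "\<psi> (m x y) = m (\<psi> x) (\<psi> y)" "\<omega> (m x y) = m (\<omega> x) (\<omega> y)"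
  using bialgebra_axioms by blast+

(* Keep exponents as numerals: the default simp set turns 1 into Suc 0, and the nat simprocs
   rewrite 0 + (1 + 1) to Suc (Suc 0). *)
declare One_nat_def [simp del] numeral_2_eq_2 [symmetric, simp]

definition smap :: "nat \<Rightarrow> nat \<Rightarrow> nat \<Rightarrow> nat \<Rightarrow> 'a \<Rightarrow> 'a" where
  "smap i j k l x = (\<alpha> ^^ i) ((\<beta> ^^ j) ((\<psi> ^^ k) ((\<omega> ^^ l) x)))"

lemma generators_eq_smap:
  "\<alpha> x = smap 1 0 0 0 x" "\<beta> x = smap 0 1 0 0 x" "\<psi> x = smap 0 0 1 0 x" "\<omega> x = smap 0 0 0 1 x"
  by (simp_all add: smap_def One_nat_def)

lemma smap_smap [simp]:
  "smap i j k l (smap i' j' k' l' x) = smap (i + i') (j + j') (k + k') (l + l') x"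
proof -
  have commute:
    "(\<beta> ^^ j) ((\<alpha> ^^ i') y) = (\<alpha> ^^ i') ((\<beta> ^^ j) y)"
    "(\<psi> ^^ k) ((\<alpha> ^^ i') y) = (\<alpha> ^^ i') ((\<psi> ^^ k) y)"
    "(\<omega> ^^ l) ((\<alpha> ^^ i') y) = (\<alpha> ^^ i') ((\<omega> ^^ l) y)"
    "(\<psi> ^^ k) ((\<beta> ^^ j') y) = (\<beta> ^^ j') ((\<psi> ^^ k) y)"
    "(\<omega> ^^ l) ((\<beta> ^^ j') y) = (\<beta> ^^ j') ((\<omega> ^^ l) y)"
    "(\<omega> ^^ l) ((\<psi> ^^ k') y) = (\<psi> ^^ k') ((\<omega> ^^ l) y)" for y
    by (simp_all add: funpow_commute_of_commute generators_commute)
  show ?thesis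
    by (simp add: smap_def commute funpow_add)
qed

lemma smap_mult [simp]: "smap i j k l (m x y) = m (smap i j k l x) (smap i j k l y)"
  by (simp add: smap_def funpow_multiplicative generators_multiplicative)

lemma lin_smap: "lin scale (smap i j k l)"
proof -
  have "lin scale ((\<alpha> ^^ i) \<circ> (\<beta> ^^ j) \<circ> (\<psi> ^^ k) \<circ> (\<omega> ^^ l))"
    using lin_funpow[OF scale_vector_space] lin_generators unfolding lin_def
    by (intro Vector_Spaces.linear_compose) auto
  then show ?thesis
    by (simp add: smap_def[abs_def] comp_def)
qed

lemma lin_id [simp]: "lin scale (\<lambda>x. x)"
  using scale_vector_space by (simp add: lin_iff)

lemma lin_smap_comp [simp]: "lin scale f \<Longrightarrow> lin scale (\<lambda>x. smap i j k l (f x))"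
  using lin_smap[of i j k l] scale_vector_space by (simp add: lin_iff)

lemma lin_mult_left [simp]: "lin scale f \<Longrightarrow> lin scale (\<lambda>x. m (f x) c)"
  using lin_mult(2)[of c] scale_vector_space by (simp add: lin_iff)

lemma lin_mult_right [simp]: "lin scale f \<Longrightarrow> lin scale (\<lambda>x. m c (f x))"
  using lin_mult(1)[of c] scale_vector_space by (simp add: lin_iff)

lemma lin_sum_pairs [simp]:
  assumes "\<And>u v. lin scale (\<lambda>x. G u v x)"
  shows "lin scale (\<lambda>x. sum_pairs (\<lambda>u v. G u v x) s)"
proof -
  have "scale c (sum_pairs F s) = sum_pairs (\<lambda>u v. scale c (F u v)) s" for c F
    using scale_vector_space by (intro additive_sum_pairs) (simp_all add: vs.scale_right_distrib)
  then show ?thesis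
    using assms scale_vector_space by (simp add: lin_iff sum_pairs_add)
qed

lemma lin_sum_pairs_out:
  assumes "lin scale f"
  shows "f (sum_pairs F s) = sum_pairs (\<lambda>u v. f (F u v)) s"
proof -
  have add: "f (x + y) = f x + f y" for x y
    using assms scale_vector_space by (simp add: lin_iff)
  then have "f 0 = 0"
    using add[of 0 0] by simp
  with add show ?thesis
    by (rule additive_sum_pairs)
qed

lemma sum_pairs_out [simp]:
  "smap i j k l (sum_pairs F s) = sum_pairs (\<lambda>u v. smap i j k l (F u v)) s"
  "m c (sum_pairs F s) = sum_pairs (\<lambda>u v. m c (F u v)) s"
  "m (sum_pairs F s) c = sum_pairs (\<lambda>u v. m (F u v) c) s"
  by (simp_all add: lin_sum_pairs_out lin_sum_pairs_out[OF lin_mult(1)] lin_sum_pairs_out[OF lin_mult(2)])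

declare bilin_map_def [simp] trilin_map_def [simp]

lemma sum_pairs_D_linear:
  assumes "bilin_map scale F"
  shows "sum_pairs F (D (scale c x + y)) = scale c (sum_pairs F (D x)) + sum_pairs F (D y)"
proof -
  have "teq2 scale (D (scale c x + y)) (map (\<lambda>(u,v). (scale c u, v)) (D x) @ D y)"
    using bialgebra_axioms by (simp add: lin_comult_def)
  then have "sum_pairs F (D (scale c x + y)) = sum_pairs (\<lambda>u v. F (scale c u) v) (D x) + sum_pairs F (D y)"
    using teq2_sum_pairs[OF scale_vector_space _ assms] sum_pairs_map[of F "scale c" "\<lambda>v. v"] by simp
  moreover have "F (scale c u) v = scale c (F u v)" for u v
    using assms scale_vector_space by (simp add: lin_iff)
  ultimately show ?thesis
    by (simp add: lin_sum_pairs_out[symmetric] lin_iff scale_vector_space vs.scale_right_distrib)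
qed

lemma sum_pairs_D_add:
  "bilin_map scale F \<Longrightarrow> sum_pairs F (D (x + y)) = sum_pairs F (D x) + sum_pairs F (D y)"
  using sum_pairs_D_linear[of F 1] by simp

lemma sum_pairs_D_zero: "bilin_map scale F \<Longrightarrow> sum_pairs F (D 0) = 0"
  using sum_pairs_D_add[of F 0 0] by simp

lemma lin_sum_pairs_D [simp]:
  "bilin_map scale F \<Longrightarrow> lin scale f \<Longrightarrow> lin scale (\<lambda>x. sum_pairs F (D (f x)))"
  using sum_pairs_D_linear[of F _ _ 0] scale_vector_space
  by (simp add: lin_iff sum_pairs_D_add sum_pairs_D_zero)

definition comult_morphism :: "('a \<Rightarrow> 'a) \<Rightarrow> bool" where
  "comult_morphism h \<longleftrightarrow> lin scale h \<and> (\<forall>F b. bilin_map scale F \<longrightarrow>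
     sum_pairs F (D (h b)) = sum_pairs (\<lambda>u v. F (h u) (h v)) (D b))"

lemma comult_morphism_id: "comult_morphism id"
  by (simp add: comult_morphism_def id_def)

lemma comult_morphism_comp:
  assumes "comult_morphism g" and "comult_morphism h"
  shows "comult_morphism (g \<circ> h)"
  unfolding comult_morphism_def
proof (intro conjI allI impI)
  show "lin scale (g \<circ> h)"
    using assms unfolding comult_morphism_def lin_def by (auto intro: Vector_Spaces.linear_compose)
  fix F b assume F: "bilin_map scale F"
  have "bilin_map scale (\<lambda>u v. F (g u) (g v))"
    using assms(1) by (intro bilin_map_comp[OF F]) (simp_all add: comult_morphism_def)
  then show "sum_pairs F (D ((g \<circ> h) b)) = sum_pairs (\<lambda>u v. F ((g \<circ> h) u) ((g \<circ> h) v)) (D b)"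
    using assms F by (simp add: comult_morphism_def del: bilin_map_def)
qed

lemma comult_morphism_funpow: "comult_morphism h \<Longrightarrow> comult_morphism (h ^^ n)"
  by (induction n) (simp_all add: comult_morphism_id comult_morphism_comp)

lemma comult_morphism_generators:
  assumes "g \<in> {\<alpha>, \<beta>, \<psi>, \<omega>}"
  shows "comult_morphism g"
  unfolding comult_morphism_def
proof (intro conjI allI impI)
  show "lin scale g"
    using assms lin_generators by blast
  fix F b assume F: "bilin_map scale F"
  have "teq2 scale (tmap2 g g (D b)) (D (g b))"
    using bialgebra_axioms assms by blast
  from teq2_sum_pairs[OF scale_vector_space this F]
  show "sum_pairs F (D (g b)) = sum_pairs (\<lambda>u v. F (g u) (g v)) (D b)"
    by (simp add: tmap2_def sum_pairs_map)
qed

lemma sum_pairs_D_smap: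
  assumes "bilin_map scale F"
  shows "sum_pairs F (D (smap i j k l b)) =
    sum_pairs (\<lambda>u v. F (smap i j k l u) (smap i j k l v)) (D b)"
proof -
  have "comult_morphism ((\<alpha> ^^ i) \<circ> (\<beta> ^^ j) \<circ> (\<psi> ^^ k) \<circ> (\<omega> ^^ l))"
    by (intro comult_morphism_comp comult_morphism_funpow comult_morphism_generators) simp_all
  then show ?thesis
    using assms by (simp add: comult_morphism_def smap_def del: bilin_map_def)
qed

lemma sum_pairs_D_sum_pairs:
  assumes "bilin_map scale F"
  shows "sum_pairs F (D (sum_pairs G s)) = sum_pairs (\<lambda>a b. sum_pairs F (D (G a b))) s"
  using assms by (induction s) (auto simp: sum_pairs_D_zero sum_pairs_D_add simp del: bilin_map_def)

lemma sum_pairs_D_mult: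
  assumes "bilin_map scale F"
  shows "sum_pairs F (D (m a b)) =
    sum_pairs (\<lambda>x y. F (m (smap 0 0 0 1 a) x) (smap 0 1 0 0 y)) (D b) +
    sum_pairs (\<lambda>x y. F (smap 1 0 0 0 x) (m y (smap 0 0 1 0 b))) (D a)"
proof -
  have "teq2 scale (D (m a b))
      (map (\<lambda>(x,y). (m (\<omega> a) x, \<beta> y)) (D b) @ map (\<lambda>(x,y). (\<alpha> x, m y (\<psi> b))) (D a))"
    using bialgebra_axioms by blast
  then show ?thesis
    using teq2_sum_pairs[OF scale_vector_space _ assms]
    by (simp add: sum_pairs_map generators_eq_smap)
qed

lemma coassociative:
  assumes "trilin_map scale F"
  shows "sum_pairs (\<lambda>x y. sum_pairs (\<lambda>u v. F u v (smap 0 0 1 0 y)) (D x)) (D a) =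
    sum_pairs (\<lambda>x y. sum_pairs (\<lambda>u v. F (smap 0 0 0 1 x) u v) (D y)) (D a)"
proof -
  have "teq3 scale
      (concat (map (\<lambda>(x,y). map (\<lambda>(u,v). (u, v, \<psi> y)) (D x)) (D a)))
      (concat (map (\<lambda>(x,y). map (\<lambda>(u,v). (\<omega> x, u, v)) (D y)) (D a)))"
    using bialgebra_axioms by blast
  from teq3_sum_triples[OF scale_vector_space this assms] show ?thesis
    unfolding sum_triples_concat_right sum_triples_concat_left by (simp only: generators_eq_smap)
qed

lemma associative: "m (smap 1 0 0 0 x) (m y z) = m (m x y) (smap 0 1 0 0 z)"
  using bialgebra_axioms by (simp add: generators_eq_smap)

abbreviation star (infixl "\<star>" 70) where
  "a \<star> b \<equiv> star_prod m D \<alpha> \<beta> \<psi> \<omega> a b"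

lemma star_smap:
  "a \<star> b = sum_pairs (\<lambda>x y. m (smap 1 2 1 0 x) (m (smap 1 0 0 0 a) (smap 2 0 0 1 y))) (D b)"
  by (simp add: star_prod_def sum_pairs_def generators_eq_smap)

lemma smap_star: "smap i j k l (a \<star> b) = smap i j k l a \<star> smap i j k l b"
  by (simp add: star_smap sum_pairs_D_smap add.commute)

lemma bilin_map_star: "bilin_map scale (\<star>)"
  by (simp add: star_smap)

lemma assoc_five_right:
  "m (m p (m q s)) (m (smap 0 2 0 0 t) (smap 0 2 0 0 w)) =
   m (smap 1 0 0 0 p) (m (smap 1 0 0 0 q) (m s (m t w)))"
proof -
  have "m (m p (m q s)) (m (smap 0 2 0 0 t) (smap 0 2 0 0 w)) =
      m (m p (m q s)) (smap 0 1 0 0 (smap 0 1 0 0 (m t w)))"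
    by simp
  also have "\<dots> = m (smap 1 0 0 0 p) (m (m q s) (smap 0 1 0 0 (m t w)))"
    by (rule associative[symmetric])
  also have "\<dots> = m (smap 1 0 0 0 p) (m (smap 1 0 0 0 q) (m s (m t w)))"
    by (simp only: associative)
  finally show ?thesis .
qed

lemma assoc_five_mid:
  "m (m a (smap 1 0 0 0 u)) (m (smap 1 1 0 0 c) (m (smap 0 1 0 0 d) (smap 0 1 0 0 e))) =
   m (smap 1 0 0 0 a) (m (m u (m c d)) (smap 0 2 0 0 e))"
proof -
  have "m (m a (smap 1 0 0 0 u)) (m (smap 1 1 0 0 c) (m (smap 0 1 0 0 d) (smap 0 1 0 0 e))) =
      m (m a (smap 1 0 0 0 u)) (smap 0 1 0 0 (m (smap 1 0 0 0 c) (m d e)))"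
    by simp
  also have "\<dots> = m (smap 1 0 0 0 a) (m (smap 1 0 0 0 u) (m (smap 1 0 0 0 c) (m d e)))"
    by (rule associative[symmetric])
  also have "\<dots> = m (smap 1 0 0 0 a) (m (m u (m c d)) (smap 0 1 0 0 (smap 0 1 0 0 e)))"
    by (simp only: associative)
  finally show ?thesis
    by simp
qed

definition coassoc_term :: "'a \<Rightarrow> 'a \<Rightarrow> 'a \<Rightarrow> 'a" where
  "coassoc_term x y z = sum_pairs (\<lambda>a b. sum_pairs (\<lambda>u v.
     m (smap 3 4 2 0 u) (m (smap 5 3 1 1 x) (m (smap 3 2 1 1 v) (m (smap 5 1 1 1 y) (smap 4 0 1 2 b)))))
     (D a)) (D z)"

lemma star_star_expansion:
  "smap 4 3 1 1 x \<star> (smap 2 1 0 0 y \<star> z) =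
     sum_pairs (\<lambda>a b. sum_pairs (\<lambda>u v.
       m (m (smap 2 4 2 1 a) (m (smap 4 3 1 1 y) (smap 3 2 1 1 u))) (m (smap 5 3 1 1 x) (smap 4 2 0 2 v)))
       (D b)) (D z) +
     sum_pairs (\<lambda>a b. sum_pairs (\<lambda>u v.
       m (m (smap 2 4 2 1 a) (smap 5 3 1 0 u)) (m (smap 5 3 1 1 x) (m (smap 5 2 0 1 v) (smap 4 1 1 2 b))))
       (D y)) (D z) +
     coassoc_term x y z"
  by (simp add: star_smap coassoc_term_def sum_pairs_D_sum_pairs sum_pairs_D_mult sum_pairs_D_smap sum_pairs_add)

lemma expansion_middle_term:
  "sum_pairs (\<lambda>a b. sum_pairs (\<lambda>u v.
     m (m (smap 2 4 2 1 a) (smap 5 3 1 0 u)) (m (smap 5 3 1 1 x) (m (smap 5 2 0 1 v) (smap 4 1 1 2 b))))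
     (D y)) (D z) =
   (smap 2 2 1 1 x \<star> smap 2 1 0 0 y) \<star> smap 2 2 1 1 z"
  using assoc_five_mid[of "smap 2 4 2 1 a" "smap 4 3 1 0 u" "smap 4 2 1 1 x" "smap 5 1 0 1 v" "smap 4 0 1 2 b"
      for a b u v]
  by (simp add: star_smap sum_pairs_D_sum_pairs sum_pairs_D_mult sum_pairs_D_smap)

lemma expansion_outer_term:
  "sum_pairs (\<lambda>a b. sum_pairs (\<lambda>u v.
     m (m (smap 2 4 2 1 a) (m (smap 4 3 1 1 y) (smap 3 2 1 1 u))) (m (smap 5 3 1 1 x) (smap 4 2 0 2 v)))
     (D b)) (D z) =
   coassoc_term y x z"
proof -
  let ?F = "\<lambda>u v w. m (smap 3 4 2 0 u)
    (m (smap 5 3 1 1 y) (m (smap 3 2 1 1 v) (m (smap 5 1 1 1 x) (smap 4 0 0 2 w))))"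
  have "coassoc_term y x z = sum_pairs (\<lambda>a b. sum_pairs (\<lambda>u v. ?F (smap 0 0 0 1 a) u v) (D b)) (D z)"
    using coassociative[of ?F z] by (simp add: coassoc_term_def)
  then show ?thesis
    using assoc_five_right[of "smap 2 4 2 1 a" "smap 4 3 1 1 y" "smap 3 2 1 1 u" "smap 5 1 1 1 x" "smap 4 0 0 2 v"
        for a u v]
    by simp
qed

lemma star_associator_eq:
  "smap 4 3 1 1 x \<star> (smap 2 1 0 0 y \<star> z) - (smap 2 2 1 1 x \<star> smap 2 1 0 0 y) \<star> smap 2 2 1 1 z =
   coassoc_term x y z + coassoc_term y x z"
  unfolding star_star_expansion expansion_middle_term expansion_outer_term by simp

lemma left_BiHom_preLie_star: "left_BiHom_preLie scale (\<star>) (smap 2 1 0 0) (smap 2 2 1 1)"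
  unfolding left_BiHom_preLie_def
proof (intro conjI allI)
  show "smap 2 1 0 0 \<circ> smap 2 2 1 1 = smap 2 2 1 1 \<circ> smap 2 1 0 0"
    by (simp add: fun_eq_iff)
  fix x y z
  show "smap 2 1 0 0 (smap 2 2 1 1 x) \<star> (smap 2 1 0 0 y \<star> z) -
      (smap 2 2 1 1 x \<star> smap 2 1 0 0 y) \<star> smap 2 2 1 1 z =
    smap 2 1 0 0 (smap 2 2 1 1 y) \<star> (smap 2 1 0 0 x \<star> z) -
      (smap 2 2 1 1 y \<star> smap 2 1 0 0 x) \<star> smap 2 2 1 1 z"
    by (simp add: star_associator_eq add.commute)
qed (simp_all add: scale_vector_space bilin_map_star lin_smap smap_star del: bilin_map_def)

lemma structure_maps_eq_smap:
  "\<alpha> \<circ> \<alpha> \<circ> \<beta> = smap 2 1 0 0"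
  "\<alpha> \<circ> \<alpha> \<circ> \<beta> \<circ> \<beta> \<circ> \<psi> \<circ> \<omega> = smap 2 2 1 1"
  by (simp_all add: fun_eq_iff generators_eq_smap)

end

theorem theorem4p6:
  fixes scale :: "'k::field \<Rightarrow> 'a::ab_group_add \<Rightarrow> 'a"
    and m :: "'a \<Rightarrow> 'a \<Rightarrow> 'a" and D :: "'a \<Rightarrow> ('a \<times> 'a) list"
    and \<alpha> \<beta> \<psi> \<omega> :: "'a \<Rightarrow> 'a"
  assumes "infinitesimal_BiHom_bialgebra scale m D \<alpha> \<beta> \<psi> \<omega>"
  shows "left_BiHom_preLie scale (star_prod m D \<alpha> \<beta> \<psi> \<omega>)
           (\<alpha> \<circ> \<alpha> \<circ> \<beta>) (\<alpha> \<circ> \<alpha> \<circ> \<beta> \<circ> \<beta> \<circ> \<psi> \<circ> \<omega>)"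
proof -
  interpret infinitesimal_BiHom scale m D \<alpha> \<beta> \<psi> \<omega>
    using assms by unfold_locales
  show ?thesis
    unfolding structure_maps_eq_smap(2) unfolding structure_maps_eq_smap(1)
    by (rule left_BiHom_preLie_star)
qed

end
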